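(* Let $\boldsymbol{m}\in\mathbb{N}^2$. For every subset $\Omega\subseteq\Gamma_\square$, the set $\Gamma_\Omega=(\Gamma_\square\setminus\Omega)\cup\{\boldsymbol{\gamma}\in\mathrm{K}:\boldsymbol{\gamma}^*\in\Omega\}$ is a spectral index set for $\mathrm{I}^{(\boldsymbol{m})}$; conversely, every spectral index set $\Gamma$ for $\mathrm{I}^{(\boldsymbol{m})}$ is of the form $\Gamma=\Gamma_\Omega$ for some $\Omega\subseteq\Gamma_\square$. In particular every spectral index set has $(2m_1+1)m_2$ elements, and for every spectral index set $\Gamma$ and $\boldsymbol{\gamma}\in\Gamma$ one has $\|\chi_{\boldsymbol{\gamma}}\|_w^2=1$ if $\gamma_1\in\{0,2m_1\}$ and $\|\chi_{\boldsymbol{\gamma}}\|_w^2=\frac12$ otherwise.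
   Context: $\mathrm{I}^{(\boldsymbol{m})}=\{(i_1,i_2)\in\mathbb{Z}^2:\ 0\le i_1\le m_1,\ -2m_2<i_2\le 2m_2,\ i_2\le0\text{ if }i_1=m_1,\ i_1+i_2\text{ even}\}$; $\mathcal{L}(\mathrm{I}^{(\boldsymbol{m})})$ is the space of all functions $\mathrm{I}^{(\boldsymbol{m})}\to\mathbb{C}$. Weights $w_{\boldsymbol{i}}=\frac{1}{4m_1m_2}$ if $i_1=0$, $w_{\boldsymbol{i}}=\frac{2}{4m_1m_2}$ if $0<i_1\le m_1$; $\langle f,h\rangle_w=\sum_{\boldsymbol{i}}w_{\boldsymbol{i}}f(\boldsymbol{i})\overline{h(\boldsymbol{i})}$. $\chi_{\boldsymbol{\gamma}}(\boldsymbol{i})=\cos\!\big(\frac{\gamma_1i_1\pi}{2m_1}\big)e^{\mathrm{i}\gamma_2i_2\pi/(2m_2)}$. $\mathrm{K}=\{\boldsymbol{\gamma}\in\mathbb{Z}^2: 0\le\gamma_1\le2m_1,\ -2m_2<\gamma_2\le2m_2\}$. A spectral index set for $\mathrm{I}^{(\boldsymbol{m})}$ is a set $\Gamma\subseteq\mathrm{K}$ such that $\gamma_1+\gamma_2$ is even for all $\boldsymbol{\gamma}\in\Gamma$ and $\{\chi_{\boldsymbol{\gamma}}:\boldsymbol{\gamma}\in\Gamma\}$ is an orthogonal basis of $(\mathcal{L}(\mathrm{I}^{(\boldsymbol{m})}),\langle\cdot,\cdot\rangle_w)$. $\Gamma_\square=\{\boldsymbol{\gamma}\in\mathrm{K}: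 -m_2<\gamma_2\le m_2,\ \gamma_1+\gamma_2\text{ even}\}$. The flip operator $^*:\mathrm{K}\to\mathrm{K}$ is $\boldsymbol{\gamma}^*=(2m_1-\gamma_1,\ \gamma_2')$ where $\gamma_2'$ is the unique element of $(-2m_2,2m_2]$ congruent to $\gamma_2+2m_2$ modulo $4m_2$. *)

theory Defs
  imports "HOL-Analysis.Analysis"
begin

definition Ipts :: "nat \<Rightarrow> nat \<Rightarrow> (int \<times> int) set" where
  "Ipts m1 m2 = {(i1, i2). 0 \<le> i1 \<and> i1 \<le> int m1 \<and> - 2 * int m2 < i2 \<and> i2 \<le> 2 * int m2
      \<and> (i1 = int m1 \<longrightarrow> i2 \<le> 0) \<and> even (i1 + i2)}"

definition wt :: "nat \<Rightarrow> nat \<Rightarrow> int \<times> int \<Rightarrow> real" where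
  "wt m1 m2 i = (if fst i = 0 then 1 / (4 * real m1 * real m2) else 2 / (4 * real m1 * real m2))"

text \<open>Weighted inner product on functions I^(m) -> C (functions are represented
  by total functions, only their values on I^(m) matter).\<close>
definition winner :: "nat \<Rightarrow> nat \<Rightarrow> (int \<times> int \<Rightarrow> complex) \<Rightarrow> (int \<times> int \<Rightarrow> complex) \<Rightarrow> complex" where
  "winner m1 m2 f h = (\<Sum>i\<in>Ipts m1 m2. complex_of_real (wt m1 m2 i) * f i * cnj (h i))"

definition chi :: "nat \<Rightarrow> nat \<Rightarrow> int \<times> int \<Rightarrow> int \<times> int \<Rightarrow> complex" where
  "chi m1 m2 \<gamma> i = complex_of_real (cos (real_of_int (fst \<gamma>) * real_of_int (fst i) * pi / (2 * real m1)))
      * exp (\<i> * complex_of_real (real_of_int (snd \<gamma>) * real_of_int (snd i) * pi / (2 * real m2)))"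

definition Kset :: "nat \<Rightarrow> nat \<Rightarrow> (int \<times> int) set" where
  "Kset m1 m2 = {(g1, g2). 0 \<le> g1 \<and> g1 \<le> 2 * int m1 \<and> - 2 * int m2 < g2 \<and> g2 \<le> 2 * int m2}"

definition spectral_index_set :: "nat \<Rightarrow> nat \<Rightarrow> (int \<times> int) set \<Rightarrow> bool" where
  "spectral_index_set m1 m2 \<Gamma> \<longleftrightarrow>
     \<Gamma> \<subseteq> Kset m1 m2 \<and>
     (\<forall>\<gamma>\<in>\<Gamma>. even (fst \<gamma> + snd \<gamma>)) \<and>
     (\<forall>\<gamma>\<in>\<Gamma>. winner m1 m2 (chi m1 m2 \<gamma>) (chi m1 m2 \<gamma>) \<noteq> 0) \<and>
     (\<forall>\<gamma>\<in>\<Gamma>. \<forall>\<gamma>'\<in>\<Gamma>. \<gamma> \<noteq> \<gamma>' \<longrightarrow> winner m1 m2 (chi m1 m2 \<gamma>) (chi m1 m2 \<gamma>') = 0) \<and>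
     (\<forall>f :: int \<times> int \<Rightarrow> complex. \<exists>c :: int \<times> int \<Rightarrow> complex.
        \<forall>i\<in>Ipts m1 m2. f i = (\<Sum>\<gamma>\<in>\<Gamma>. c \<gamma> * chi m1 m2 \<gamma> i))"

definition Gamma_sq :: "nat \<Rightarrow> nat \<Rightarrow> (int \<times> int) set" where
  "Gamma_sq m1 m2 = {\<gamma> \<in> Kset m1 m2. - int m2 < snd \<gamma> \<and> snd \<gamma> \<le> int m2 \<and> even (fst \<gamma> + snd \<gamma>)}"

definition flip :: "nat \<Rightarrow> nat \<Rightarrow> int \<times> int \<Rightarrow> int \<times> int" where
  "flip m1 m2 \<gamma> = (2 * int m1 - fst \<gamma>,
      THE g. - 2 * int m2 < g \<and> g \<le> 2 * int m2 \<and> g mod (4 * int m2) = (snd \<gamma> + 2 * int m2) mod (4 * int m2))"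

definition Gamma_Omega :: "nat \<Rightarrow> nat \<Rightarrow> (int \<times> int) set \<Rightarrow> (int \<times> int) set" where
  "Gamma_Omega m1 m2 \<Omega> = (Gamma_sq m1 m2 - \<Omega>) \<union> {\<gamma> \<in> Kset m1 m2. flip m1 m2 \<gamma> \<in> \<Omega>}"

end

theory Submission
  imports Defs "Jordan_Normal_Form.Determinant"
begin

text \<open>Since \<open>i\<^sub>1 + i\<^sub>2\<close> is even on \<open>I\<^sup>(\<^sup>m\<^sup>)\<close>, the characters \<open>\<chi>\<^sub>\<gamma>\<close> and
  \<open>\<chi>\<^sub>\<gamma>\<^sub>*\<close> coincide there. The characters indexed by \<open>\<Gamma>\<^sub>\<box>\<close> are pairwise
  orthogonal with squared norms \<open>1\<close> or \<open>1/2\<close>: summing over a column of \<open>I\<^sup>(\<^sup>m\<^sup>)\<close> gives a sum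
  of roots of unity, which kills distinct second frequencies (on the short column \<open>i\<^sub>1 = m\<^sub>1\<close> an
  odd difference is killed by \<open>cos (k\<pi>/2) = 0\<close> instead), and for equal second frequencies what
  remains is the orthogonality of the discrete cosine transform with trapezoid weights. As
  \<open>|\<Gamma>\<^sub>\<box>| = |I\<^sup>(\<^sup>m\<^sup>)|\<close>, they form an orthogonal basis.

  Exactly one of \<open>\<gamma>\<close> and \<open>\<gamma>\<^sup>*\<close> lies in \<open>\<Gamma>\<^sub>\<box>\<close>, so \<open>\<Gamma>\<^sub>\<Omega>\<close> is \<open>\<Gamma>\<^sub>\<box>\<close> with the
  points of \<open>\<Omega>\<close> replaced by their flips, which index the same functions. Conversely, a spectral
  index set cannot contain both \<open>\<gamma>\<close> and \<open>\<gamma>\<^sup>*\<close> (the same nonzero function would be orthogonal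
  to itself), and it must contain one of them (otherwise \<open>\<chi>\<^sub>\<gamma>\<close> would be orthogonal to its own
  expansion in the basis). Hence \<open>\<Gamma> = \<Gamma>\<^sub>\<Omega>\<close> with \<open>\<Omega> = \<Gamma>\<^sub>\<box> - \<Gamma>\<close>.\<close>

lemma mat_mult_vec_left_inverse:
  fixes M L :: "'a :: field mat"
  assumes M: "M \<in> carrier_mat n n" and L: "L \<in> carrier_mat n n" and LM: "L * M = 1\<^sub>m n"
    and v: "v \<in> carrier_vec n"
  shows "M *\<^sub>v (L *\<^sub>v v) = v"
proof -
  have "M * L = 1\<^sub>m n" by (rule mat_mult_left_right_inverse[OF L M LM])
  moreover have "M *\<^sub>v (L *\<^sub>v v) = (M * L) *\<^sub>v v" using M L v by simp
  ultimately show ?thesis using v by simp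
qed

lemma orthogonal_family_spans:
  fixes I :: "'a set" and G :: "'b set" and phi :: "'b \<Rightarrow> 'a \<Rightarrow> complex" and w :: "'a \<Rightarrow> complex"
  assumes fI: "finite I" and fG: "finite G" and cardeq: "card G = card I"
    and nz: "\<And>g. g \<in> G \<Longrightarrow> (\<Sum>i\<in>I. w i * phi g i * cnj (phi g i)) \<noteq> 0"
    and orth: "\<And>g g'. g \<in> G \<Longrightarrow> g' \<in> G \<Longrightarrow> g \<noteq> g' \<Longrightarrow> (\<Sum>i\<in>I. w i * phi g i * cnj (phi g' i)) = 0"
  shows "\<exists>c. \<forall>i\<in>I. f i = (\<Sum>g\<in>G. c g * phi g i)"
proof -
  define n where "n = card I"
  obtain e where e: "bij_betw e {0..<n} I" using ex_bij_betw_nat_finite[OF fI] n_def by blast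
  obtain b where b: "bij_betw b {0..<n} G" using ex_bij_betw_nat_finite[OF fG] cardeq n_def by auto
  define nr where "nr g = (\<Sum>i\<in>I. w i * phi g i * cnj (phi g i))" for g
  define M where "M = mat n n (\<lambda>(s,r). phi (b r) (e s))"
  define L where "L = mat n n (\<lambda>(r,s). w (e s) * cnj (phi (b r) (e s)) / nr (b r))"
  have LM: "L * M = 1\<^sub>m n"
  proof (rule eq_matI)
    fix r r' assume "r < dim_row (1\<^sub>m n)" "r' < dim_col (1\<^sub>m n)"
    then have r: "r < n" "r' < n" by auto
    have "(L * M) $$ (r,r') = (\<Sum>s\<in>{0..<n}. w (e s) * cnj (phi (b r) (e s)) / nr (b r) * phi (b r') (e s))"
      using r by (simp add: L_def M_def scalar_prod_def)
    also have "\<dots> = (\<Sum>s\<in>{0..<n}. w (e s) * phi (b r') (e s) * cnj (phi (b r) (e s))) / nr (b r)"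
      by (simp add: sum_divide_distrib algebra_simps)
    also have "\<dots> = (\<Sum>i\<in>I. w i * phi (b r') i * cnj (phi (b r) i)) / nr (b r)"
      by (subst sum.reindex_bij_betw[OF e, symmetric]) simp
    also have "\<dots> = (if r = r' then 1 else 0)"
    proof (cases "r = r'")
      case True
      have "b r \<in> G" using b r by (auto simp: bij_betw_def)
      then show ?thesis using True nz[of "b r"] by (simp add: nr_def)
    next
      case False
      have "b r \<noteq> b r'" using b r False by (auto simp: bij_betw_def inj_on_def)
      moreover have "b r \<in> G" "b r' \<in> G" using b r by (auto simp: bij_betw_def)
      ultimately show ?thesis using False orth[of "b r'" "b r"] by simp
    qed
    finally show "(L * M) $$ (r,r') = 1\<^sub>m n $$ (r,r')" using r by simp
  qed (auto simp: L_def M_def)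
  define v where "v = vec n (\<lambda>s. f (e s))"
  define u where "u = L *\<^sub>v v"
  have Mu: "M *\<^sub>v u = v"
    unfolding u_def by (rule mat_mult_vec_left_inverse[OF _ _ LM]) (auto simp: M_def L_def v_def)
  define c where "c g = u $ (the_inv_into {0..<n} b g)" for g
  show ?thesis
  proof (intro exI ballI)
    fix i assume "i \<in> I"
    then obtain s where s: "s < n" "e s = i" using e by (auto simp: bij_betw_def)
    have "f i = (M *\<^sub>v u) $ s" using s Mu by (simp add: v_def)
    also have "\<dots> = (\<Sum>r\<in>{0..<n}. phi (b r) i * u $ r)"
      using s by (simp add: M_def scalar_prod_def u_def L_def)
    also have "\<dots> = (\<Sum>r\<in>{0..<n}. c (b r) * phi (b r) i)"
      by (rule sum.cong) (auto simp: c_def the_inv_into_f_f[OF bij_betw_imp_inj_on[OF b]])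
    also have "\<dots> = (\<Sum>g\<in>G. c g * phi g i)"
      by (rule sum.reindex_bij_betw[OF b])
    finally show "f i = (\<Sum>g\<in>G. c g * phi g i)" .
  qed
qed

lemma dvd_abs_less_imp_eq_0:
  fixes n t :: int
  assumes "n dvd t" "\<bar>t\<bar> < n"
  shows "t = 0"
proof (rule ccontr)
  assume "t \<noteq> 0"
  then have "\<bar>n\<bar> \<le> \<bar>t\<bar>" using dvd_imp_le_int assms(1) by blast
  then show False using assms(2) by linarith
qed

lemma sum_roots_of_unity:
  fixes t :: int and N :: nat
  assumes N: "N > 0"
  shows "(\<Sum>k<N. exp (\<i> * complex_of_real (2 * pi * real_of_int t * real k / real N)))
        = (if int N dvd t then of_nat N else 0)"
proof -
  define q where "q = exp (\<i> * complex_of_real (2 * pi * real_of_int t / real N))"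
  have qk: "exp (\<i> * complex_of_real (2 * pi * real_of_int t * real k / real N)) = q ^ k" for k
  proof -
    have "\<i> * complex_of_real (2 * pi * real_of_int t * real k / real N)
          = of_nat k * (\<i> * complex_of_real (2 * pi * real_of_int t / real N))"
      by (simp add: field_simps)
    then show ?thesis unfolding q_def by (metis exp_of_nat_mult)
  qed
  have qN: "q ^ N = 1"
  proof -
    have "q ^ N = exp (of_nat N * (\<i> * complex_of_real (2 * pi * real_of_int t / real N)))"
      unfolding q_def by (simp only: exp_of_nat_mult)
    also have "of_nat N * (\<i> * complex_of_real (2 * pi * real_of_int t / real N))
        = \<i> * (complex_of_int t * (complex_of_real pi * 2))"
      using N by (simp add: field_simps)
    finally show ?thesis by (simp add: exp_2pi_1_int)
  qed
  have q1: "q = 1 \<longleftrightarrow> int N dvd t"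
  proof
    assume "q = 1"
    then obtain n :: int where "2 * pi * real_of_int t / real N = real_of_int (2 * n) * pi"
      unfolding q_def exp_eq_1 by auto
    then have "real_of_int t = real_of_int n * real N" using N by (simp add: field_simps)
    then have "t = n * int N" by (metis of_int_eq_iff of_int_mult of_int_of_nat_eq)
    then show "int N dvd t" by simp
  next
    assume "int N dvd t"
    then obtain n where n: "t = int N * n" by (auto elim: dvdE)
    have "\<i> * complex_of_real (2 * pi * real_of_int t / real N) = \<i> * (complex_of_int n * (complex_of_real pi * 2))"
      using N by (simp add: n field_simps)
    then show "q = 1" unfolding q_def by (simp add: exp_2pi_1_int)
  qed
  show ?thesis
  proof (cases "int N dvd t")
    case True
    then show ?thesis using q1 by (simp only: qk) simp
  next
    case False
    then show ?thesis using q1 by (simp only: qk) (simp add: geometric_sum qN)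
  qed
qed

definition trapezoid_weight :: "nat \<Rightarrow> int \<Rightarrow> real" where
  "trapezoid_weight m j = (if j = 0 \<or> j = int m then 1 else 2)"

text \<open>Folding the full period \<open>{0..<2m}\<close> at \<open>m\<close> by \<open>j \<mapsto> 2m - j\<close> turns the
  cosine sum over a period into the trapezoid sum over \<open>{0..m}\<close>.\<close>
lemma sum_trapezoid_cos:
  fixes t :: int and m :: nat
  assumes m: "m \<ge> 1"
  shows "(\<Sum>j\<in>{0..int m}. trapezoid_weight m j * cos (pi * real_of_int t * real_of_int j / real m))
       = (if int (2 * m) dvd t then 2 * real m else 0)"
proof -
  define f where "f j = cos (pi * real_of_int t * real_of_int j / real m)" for j :: int
  have period: "(\<Sum>j\<in>{0..<2 * int m}. f j) = (if int (2 * m) dvd t then 2 * real m else 0)"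
  proof -
    have "{0..<2 * int m} = int ` {..<2 * m}"
      by (simp add: image_int_atLeastLessThan atLeast0LessThan[symmetric])
    then have "(\<Sum>j\<in>{0..<2 * int m}. f j) = (\<Sum>k<2 * m. f (int k))" by (simp add: sum.reindex)
    also have "\<dots> = (\<Sum>k<2 * m. cos (2 * pi * real_of_int t * real k / real (2 * m)))"
      unfolding f_def by (rule sum.cong) (auto simp: field_simps)
    also have "\<dots> = Re (\<Sum>k<2 * m. exp (\<i> * complex_of_real (2 * pi * real_of_int t * real k / real (2 * m))))"
      by (simp add: Re_exp)
    also have "\<dots> = (if int (2 * m) dvd t then 2 * real m else 0)"
      by (subst sum_roots_of_unity) (use m in auto)
    finally show ?thesis .
  qed
  have fold: "(\<Sum>j\<in>{int m + 1..<2 * int m}. f j) = (\<Sum>j\<in>{1..<int m}. f j)"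
  proof (rule sum.reindex_bij_witness[of _ "\<lambda>j. 2 * int m - j" "\<lambda>j. 2 * int m - j"])
    fix j
    have "pi * real_of_int t * real_of_int (2 * int m - j) / real m
        = 2 * pi * real_of_int t - pi * real_of_int t * real_of_int j / real m"
      using m by (simp add: field_simps)
    then show "f (2 * int m - j) = f j" unfolding f_def by (simp add: cos_diff)
  qed auto
  have "(\<Sum>j\<in>{0..int m}. trapezoid_weight m j * f j)
      = (\<Sum>j\<in>{0..int m}. f j + (if j \<in> {1..<int m} then f j else 0))"
    by (rule sum.cong) (auto simp: trapezoid_weight_def)
  also have "\<dots> = (\<Sum>j\<in>{0..int m}. f j) + (\<Sum>j\<in>{1..<int m}. f j)"
  proof -
    have "{0..int m} \<inter> {j. 1 \<le> j \<and> j < int m} = {1..<int m}" by auto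
    then show ?thesis by (simp add: sum.distrib sum.If_cases)
  qed
  also have "\<dots> = (\<Sum>j\<in>{0..<2 * int m}. f j)"
  proof -
    have split: "{0..<2 * int m} = {0..int m} \<union> {int m + 1..<2 * int m}" using m by auto
    show ?thesis unfolding split by (subst sum.union_disjoint) (auto simp: fold)
  qed
  finally show ?thesis using period unfolding f_def by simp
qed

lemma sum_trapezoid_cos_mult_cos:
  fixes a b :: int and m :: nat
  assumes m: "m \<ge> 1" and a: "0 \<le> a" "a \<le> 2 * int m" and b: "0 \<le> b" "b \<le> 2 * int m"
    and ab: "even (a + b)"
  shows "(\<Sum>j\<in>{0..int m}. trapezoid_weight m j *
            (cos (real_of_int a * real_of_int j * pi / (2 * real m)) * cos (real_of_int b * real_of_int j * pi / (2 * real m))))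
       = (if a = b then (if a \<in> {0, 2 * int m} then 2 * real m else real m) else 0)"
proof -
  have "even (a - b)" using ab by presburger
  then obtain s where s: "a - b = 2 * s" by (rule evenE)
  obtain t where t: "a + b = 2 * t" using ab by (rule evenE)
  define H where "H r = (\<Sum>j\<in>{0..int m}. trapezoid_weight m j * cos (pi * real_of_int r * real_of_int j / real m))"
    for r :: int
  have H: "H r = (if int (2 * m) dvd r then 2 * real m else 0)" for r
    unfolding H_def by (rule sum_trapezoid_cos[OF m])
  have prod: "cos (real_of_int a * real_of_int j * pi / (2 * real m)) * cos (real_of_int b * real_of_int j * pi / (2 * real m))
      = (cos (pi * real_of_int s * real_of_int j / real m) + cos (pi * real_of_int t * real_of_int j / real m)) / 2"
    for j :: int
  proof -
    have "real_of_int a - real_of_int b = 2 * real_of_int s" "real_of_int a + real_of_int b = 2 * real_of_int t"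
      using arg_cong[OF s, of real_of_int] arg_cong[OF t, of real_of_int] by simp_all
    moreover have "real_of_int a * real_of_int j * pi / (2 * real m) - real_of_int b * real_of_int j * pi / (2 * real m)
        = (real_of_int a - real_of_int b) * (real_of_int j * pi / (2 * real m))"
      and "real_of_int a * real_of_int j * pi / (2 * real m) + real_of_int b * real_of_int j * pi / (2 * real m)
        = (real_of_int a + real_of_int b) * (real_of_int j * pi / (2 * real m))"
      by (simp_all add: algebra_simps diff_divide_distrib add_divide_distrib)
    ultimately have "real_of_int a * real_of_int j * pi / (2 * real m) - real_of_int b * real_of_int j * pi / (2 * real m)
          = pi * real_of_int s * real_of_int j / real m"
      and "real_of_int a * real_of_int j * pi / (2 * real m) + real_of_int b * real_of_int j * pi / (2 * real m)
          = pi * real_of_int t * real_of_int j / real m"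
      using m by simp_all
    then show ?thesis by (simp add: cos_times_cos)
  qed
  have "(\<Sum>j\<in>{0..int m}. trapezoid_weight m j *
            (cos (real_of_int a * real_of_int j * pi / (2 * real m)) * cos (real_of_int b * real_of_int j * pi / (2 * real m))))
      = (\<Sum>j\<in>{0..int m}. trapezoid_weight m j * cos (pi * real_of_int s * real_of_int j / real m) / 2
          + trapezoid_weight m j * cos (pi * real_of_int t * real_of_int j / real m) / 2)"
    unfolding prod by (simp only: distrib_left add_divide_distrib times_divide_eq_right)
  also have "\<dots> = (H s + H t) / 2"
    unfolding H_def sum.distrib add_divide_distrib sum_divide_distrib ..
  also have "\<dots> = (if a = b then (if a \<in> {0, 2 * int m} then 2 * real m else real m) else 0)"
  proof -
    have "int (2 * m) dvd s \<longleftrightarrow> s = 0"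
      using dvd_abs_less_imp_eq_0[of "int (2 * m)" s] s a b m by auto
    moreover have "int (2 * m) dvd t \<longleftrightarrow> t = 0 \<or> t = 2 * int m"
      using dvd_abs_less_imp_eq_0[of "int (2 * m)" t] dvd_abs_less_imp_eq_0[of "int (2 * m)" "t - 2 * int m"]
        t a b m by auto
    ultimately show ?thesis using s t a b by (auto simp: H)
  qed
  finally show ?thesis .
qed

lemma parity_interval_eq_image:
  fixes a c :: int and n :: nat
  shows "{x::int. a < x \<and> x \<le> a + 2 * int n \<and> even (c + x)}
       = (\<lambda>k. a + 1 + (a + 1 + c) mod 2 + 2 * int k) ` {..<n}"
proof (rule Set.set_eqI, rule iffI)
  fix x assume x: "x \<in> {x::int. a < x \<and> x \<le> a + 2 * int n \<and> even (c + x)}"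
  define r where "r = (a + 1 + c) mod 2"
  define k where "k = (x - a - 1 - r) div 2"
  have r: "r = 0 \<or> r = 1" unfolding r_def by presburger
  have e: "x = a + 1 + r + 2 * k" using x r unfolding k_def r_def by auto presburger+
  have "k \<ge> 0" "k < int n" using e x r by auto
  then show "x \<in> (\<lambda>k. a + 1 + (a + 1 + c) mod 2 + 2 * int k) ` {..<n}"
    using e unfolding r_def by (auto intro!: image_eqI[of _ _ "nat k"])
next
  fix x assume "x \<in> (\<lambda>k. a + 1 + (a + 1 + c) mod 2 + 2 * int k) ` {..<n}"
  then obtain k where k: "k < n" "x = a + 1 + (a + 1 + c) mod 2 + 2 * int k" by auto
  have "(a + 1 + c) mod 2 = 0 \<or> (a + 1 + c) mod 2 = 1" by presburger
  then show "x \<in> {x::int. a < x \<and> x \<le> a + 2 * int n \<and> even (c + x)}"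
    using k by auto
qed

lemma card_parity_interval:
  fixes a c :: int and n :: nat
  shows "card {x::int. a < x \<and> x \<le> a + 2 * int n \<and> even (c + x)} = n"
  unfolding parity_interval_eq_image by (subst card_image) (auto simp: inj_on_def)

definition col_len :: "nat \<Rightarrow> nat \<Rightarrow> int \<Rightarrow> nat" where
  "col_len m1 m2 i1 = (if i1 = int m1 then m2 else 2 * m2)"

text \<open>The column of \<open>I\<^sup>(\<^sup>m\<^sup>)\<close> above \<open>i\<^sub>1\<close>, written in the shape of
  \<open>parity_interval_eq_image\<close>.\<close>
definition Icol :: "nat \<Rightarrow> nat \<Rightarrow> int \<Rightarrow> int set" where
  "Icol m1 m2 i1 = {i2. - 2 * int m2 < i2 \<and> i2 \<le> - 2 * int m2 + 2 * int (col_len m1 m2 i1) \<and> even (i1 + i2)}"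

lemma Ipts_eq_Sigma_Icol: "Ipts m1 m2 = Sigma {0..int m1} (Icol m1 m2)"
  unfolding Ipts_def Icol_def col_len_def by (auto split: if_splits)

lemma finite_Icol: "finite (Icol m1 m2 i1)"
  unfolding Icol_def by (rule finite_subset[of _ "{- 2 * int m2<..- 2 * int m2 + 2 * int (col_len m1 m2 i1)}"]) auto

lemma card_Icol: "card (Icol m1 m2 i1) = col_len m1 m2 i1"
  unfolding Icol_def by (rule card_parity_interval)

lemma finite_Ipts: "finite (Ipts m1 m2)"
  unfolding Ipts_eq_Sigma_Icol by (auto intro: finite_Icol)

lemma card_Ipts: "card (Ipts m1 m2) = (2 * m1 + 1) * m2"
proof -
  have "card (Ipts m1 m2) = (\<Sum>i1\<in>{0..int m1}. col_len m1 m2 i1)"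
    unfolding Ipts_eq_Sigma_Icol card_Icol[symmetric] by (rule card_SigmaI) (auto simp: finite_Icol)
  also have "\<dots> = (\<Sum>i1\<in>insert (int m1) {0..<int m1}. col_len m1 m2 i1)"
    by (rule sum.cong) auto
  also have "\<dots> = (2 * m1 + 1) * m2" by (subst sum.insert) (auto simp: col_len_def)
  finally show ?thesis .
qed

lemma finite_Kset: "finite (Kset m1 m2)"
  by (rule finite_subset[of _ "{0..2 * int m1} \<times> {- 2 * int m2..2 * int m2}"]) (auto simp: Kset_def)

lemma card_Gamma_sq: "card (Gamma_sq m1 m2) = (2 * m1 + 1) * m2"
proof -
  have "Gamma_sq m1 m2
      = Sigma {0..2 * int m1} (\<lambda>g1. {x::int. - int m2 < x \<and> x \<le> - int m2 + 2 * int m2 \<and> even (g1 + x)})"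
    unfolding Gamma_sq_def Kset_def by auto
  moreover have "finite {x::int. - int m2 < x \<and> x \<le> - int m2 + 2 * int m2 \<and> even (g1 + x)}" for g1
    by (rule finite_subset[of _ "{- int m2<..- int m2 + 2 * int m2}"]) auto
  ultimately have "card (Gamma_sq m1 m2) = (\<Sum>g1\<in>{0..2 * int m1}. m2)"
    by (simp add: card_parity_interval[of "- int m2" m2, simplified])
  also have "\<dots> = (2 * m1 + 1) * m2"
    by (simp add: nat_add_distrib nat_mult_distrib)
  finally show ?thesis .
qed

lemma winner_cong:
  assumes "\<And>i. i \<in> Ipts m1 m2 \<Longrightarrow> f i = f' i" "\<And>i. i \<in> Ipts m1 m2 \<Longrightarrow> h i = h' i"
  shows "winner m1 m2 f h = winner m1 m2 f' h'"
  unfolding winner_def using assms by (intro sum.cong) auto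

lemma winner_sum_right:
  "winner m1 m2 f (\<lambda>i. \<Sum>\<gamma>\<in>G. c \<gamma> * phi \<gamma> i) = (\<Sum>\<gamma>\<in>G. cnj (c \<gamma>) * winner m1 m2 f (phi \<gamma>))"
proof -
  have "winner m1 m2 f (\<lambda>i. \<Sum>\<gamma>\<in>G. c \<gamma> * phi \<gamma> i)
      = (\<Sum>i\<in>Ipts m1 m2. \<Sum>\<gamma>\<in>G. cnj (c \<gamma>) * (complex_of_real (wt m1 m2 i) * f i * cnj (phi \<gamma> i)))"
    unfolding winner_def cnj_sum complex_cnj_mult sum_distrib_left by (simp only: mult_ac)
  also have "\<dots> = (\<Sum>\<gamma>\<in>G. cnj (c \<gamma>) * winner m1 m2 f (phi \<gamma>))"
    unfolding winner_def by (subst sum.swap) (simp add: sum_distrib_left)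
  finally show ?thesis .
qed

lemma chi_mult_cnj_chi:
  "chi m1 m2 (a1, a2) (i1, i2) * cnj (chi m1 m2 (b1, b2) (i1, i2))
   = complex_of_real (cos (real_of_int a1 * real_of_int i1 * pi / (2 * real m1)) * cos (real_of_int b1 * real_of_int i1 * pi / (2 * real m1)))
     * exp (\<i> * complex_of_real (real_of_int (a2 - b2) * real_of_int i2 * pi / (2 * real m2)))"
proof -
  have "cnj (exp (\<i> * complex_of_real (real_of_int b2 * real_of_int i2 * pi / (2 * real m2))))
      = exp (- (\<i> * complex_of_real (real_of_int b2 * real_of_int i2 * pi / (2 * real m2))))"
    by (simp add: exp_cnj)
  moreover have "exp (\<i> * complex_of_real (real_of_int a2 * real_of_int i2 * pi / (2 * real m2)))
     * exp (- (\<i> * complex_of_real (real_of_int b2 * real_of_int i2 * pi / (2 * real m2))))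
     = exp (\<i> * complex_of_real (real_of_int (a2 - b2) * real_of_int i2 * pi / (2 * real m2)))"
    by (simp add: exp_add[symmetric] algebra_simps diff_divide_distrib)
  ultimately show ?thesis unfolding chi_def by (simp add: algebra_simps)
qed

lemma winner_chi_eq_sum_Icol:
  "winner m1 m2 (chi m1 m2 (a1, a2)) (chi m1 m2 (b1, b2))
    = (\<Sum>i1\<in>{0..int m1}. complex_of_real ((if i1 = 0 then 1 / (4 * real m1 * real m2) else 2 / (4 * real m1 * real m2))
         * (cos (real_of_int a1 * real_of_int i1 * pi / (2 * real m1)) * cos (real_of_int b1 * real_of_int i1 * pi / (2 * real m1))))
       * (\<Sum>i2\<in>Icol m1 m2 i1. exp (\<i> * complex_of_real (real_of_int (a2 - b2) * real_of_int i2 * pi / (2 * real m2)))))"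
proof -
  have "winner m1 m2 (chi m1 m2 (a1, a2)) (chi m1 m2 (b1, b2))
     = (\<Sum>i1\<in>{0..int m1}. \<Sum>i2\<in>Icol m1 m2 i1.
          complex_of_real (wt m1 m2 (i1, i2)) * (chi m1 m2 (a1, a2) (i1, i2) * cnj (chi m1 m2 (b1, b2) (i1, i2))))"
    unfolding winner_def Ipts_eq_Sigma_Icol by (subst sum.Sigma) (auto simp: finite_Icol mult.assoc)
  then show ?thesis unfolding chi_mult_cnj_chi wt_def by (simp add: sum_distrib_left mult.assoc)
qed

text \<open>The column \<open>i\<^sub>1 = m\<^sub>1\<close> has only \<open>m\<^sub>2\<close> points, so there the sum vanishes only for
  even frequencies \<open>d\<close>.\<close>
lemma sum_exp_Icol_eq_0:
  fixes d :: int
  assumes d: "d \<noteq> 0" "\<bar>d\<bar> < 2 * int m2" and col: "i1 = int m1 \<Longrightarrow> even d"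
  shows "(\<Sum>i2\<in>Icol m1 m2 i1. exp (\<i> * complex_of_real (real_of_int d * real_of_int i2 * pi / (2 * real m2)))) = 0"
proof -
  define n where "n = col_len m1 m2 i1"
  define b where "b = - 2 * int m2 + 1 + (- 2 * int m2 + 1 + i1) mod 2"
  have Icol: "Icol m1 m2 i1 = (\<lambda>k. b + 2 * int k) ` {..<n}"
    unfolding Icol_def n_def[symmetric] b_def using parity_interval_eq_image[of "- 2 * int m2" n i1]
    by (simp add: add.assoc)
  have "(\<Sum>i2\<in>Icol m1 m2 i1. exp (\<i> * complex_of_real (real_of_int d * real_of_int i2 * pi / (2 * real m2))))
      = (\<Sum>k<n. exp (\<i> * complex_of_real (real_of_int d * real_of_int (b + 2 * int k) * pi / (2 * real m2))))"
    unfolding Icol by (subst sum.reindex) (auto simp: inj_on_def)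
  also have "\<dots> = (\<Sum>k<n. exp (\<i> * complex_of_real (real_of_int d * real_of_int b * pi / (2 * real m2)))
      * exp (\<i> * complex_of_real (real_of_int d * 2 * real k * pi / (2 * real m2))))"
    by (rule sum.cong) (auto simp: exp_add[symmetric] algebra_simps add_divide_distrib)
  also have "\<dots> = 0"
  proof (cases "i1 = int m1")
    case False
    have "\<not> int (2 * m2) dvd d" using dvd_abs_less_imp_eq_0[of "int (2 * m2)" d] d by auto
    moreover have "(\<Sum>k<n. exp (\<i> * complex_of_real (real_of_int d * 2 * real k * pi / (2 * real m2))))
        = (\<Sum>k<2 * m2. exp (\<i> * complex_of_real (2 * pi * real_of_int d * real k / real (2 * m2))))"
      using False unfolding n_def col_len_def by (intro sum.cong) (auto simp: field_simps)
    ultimately show ?thesis using sum_roots_of_unity[of "2 * m2" d] d by (simp add: sum_distrib_left[symmetric])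
  next
    case True
    obtain t where t: "d = 2 * t" using col[OF True] by (auto elim: evenE)
    have "\<not> int m2 dvd t" using dvd_abs_less_imp_eq_0[of "int m2" t] d t by (auto simp: abs_mult)
    moreover have "(\<Sum>k<n. exp (\<i> * complex_of_real (real_of_int d * 2 * real k * pi / (2 * real m2))))
        = (\<Sum>k<m2. exp (\<i> * complex_of_real (2 * pi * real_of_int t * real k / real m2)))"
      using True unfolding n_def col_len_def by (intro sum.cong) (auto simp: field_simps t)
    ultimately show ?thesis using sum_roots_of_unity[of m2 t] d t by (simp add: sum_distrib_left[symmetric])
  qed
  finally show ?thesis .
qed

lemma winner_chi_eq_0_if_snd_ne:
  assumes m1: "m1 \<ge> 1" and ne: "a2 \<noteq> b2" and d: "\<bar>a2 - b2\<bar> < 2 * int m2"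
    and a: "even (a1 + a2)" and b: "even (b1 + b2)"
  shows "winner m1 m2 (chi m1 m2 (a1, a2)) (chi m1 m2 (b1, b2)) = 0"
  unfolding winner_chi_eq_sum_Icol
proof (intro sum.neutral ballI)
  fix i1 :: int
  show "complex_of_real ((if i1 = 0 then 1 / (4 * real m1 * real m2) else 2 / (4 * real m1 * real m2))
         * (cos (real_of_int a1 * real_of_int i1 * pi / (2 * real m1)) * cos (real_of_int b1 * real_of_int i1 * pi / (2 * real m1))))
       * (\<Sum>i2\<in>Icol m1 m2 i1. exp (\<i> * complex_of_real (real_of_int (a2 - b2) * real_of_int i2 * pi / (2 * real m2)))) = 0"
  proof (cases "i1 = int m1 \<and> odd (a2 - b2)")
    case True
    text \<open>Then \<open>a\<^sub>1\<close> or \<open>b\<^sub>1\<close> is odd, and \<open>cos (k \<pi> / 2) = 0\<close> for odd \<open>k\<close>.\<close>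
    have "odd a1 \<or> odd b1" using True a b by presburger
    moreover have "cos (real_of_int k * real_of_int (int m1) * pi / (2 * real m1)) = 0" if "odd k" for k :: int
    proof -
      have "real_of_int k * real_of_int (int m1) * pi / (2 * real m1) = of_int k * (pi / 2)"
        using m1 by (simp add: field_simps)
      then show ?thesis using that cos_zero_iff_int by auto
    qed
    ultimately show ?thesis using True by auto
  next
    case False
    then show ?thesis using sum_exp_Icol_eq_0[of "a2 - b2" m2 i1 m1] ne d by auto
  qed
qed

lemma winner_chi_same_snd:
  assumes m1: "m1 \<ge> 1" and m2: "m2 \<ge> 1"
  shows "winner m1 m2 (chi m1 m2 (a1, c)) (chi m1 m2 (b1, c))
    = complex_of_real ((\<Sum>j\<in>{0..int m1}. trapezoid_weight m1 j *
        (cos (real_of_int a1 * real_of_int j * pi / (2 * real m1)) * cos (real_of_int b1 * real_of_int j * pi / (2 * real m1))))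
        / (2 * real m1))"
  unfolding winner_chi_eq_sum_Icol of_real_sum sum_divide_distrib
proof (intro sum.cong refl)
  fix j assume "j \<in> {0..int m1}"
  define W where "W = (if j = 0 then 1 / (4 * real m1 * real m2) else 2 / (4 * real m1 * real m2))"
  define C where "C = cos (real_of_int a1 * real_of_int j * pi / (2 * real m1)) * cos (real_of_int b1 * real_of_int j * pi / (2 * real m1))"
  have "W * real (col_len m1 m2 j) = trapezoid_weight m1 j / (2 * real m1)"
    using \<open>j \<in> {0..int m1}\<close> m1 m2 by (auto simp: W_def col_len_def trapezoid_weight_def divide_simps)
  then have WC: "W * C * real (col_len m1 m2 j) = trapezoid_weight m1 j * C / (2 * real m1)"
    by (metis mult.commute mult.left_commute times_divide_eq_left)
  have col: "(\<Sum>i2\<in>Icol m1 m2 j. exp (\<i> * complex_of_real (real_of_int (c - c) * real_of_int i2 * pi / (2 * real m2))))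
      = complex_of_real (real (col_len m1 m2 j))"
    by (simp add: card_Icol)
  show "complex_of_real ((if j = 0 then 1 / (4 * real m1 * real m2) else 2 / (4 * real m1 * real m2))
        * (cos (real_of_int a1 * real_of_int j * pi / (2 * real m1)) * cos (real_of_int b1 * real_of_int j * pi / (2 * real m1))))
      * (\<Sum>i2\<in>Icol m1 m2 j. exp (\<i> * complex_of_real (real_of_int (c - c) * real_of_int i2 * pi / (2 * real m2))))
    = complex_of_real (trapezoid_weight m1 j *
        (cos (real_of_int a1 * real_of_int j * pi / (2 * real m1)) * cos (real_of_int b1 * real_of_int j * pi / (2 * real m1)))
        / (2 * real m1))"
    unfolding W_def[symmetric] C_def[symmetric] by (simp only: col of_real_mult[symmetric] WC)
qed

lemma winner_chi_Gamma_sq: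
  assumes m1: "m1 \<ge> 1" and m2: "m2 \<ge> 1" and g: "g \<in> Gamma_sq m1 m2" and h: "h \<in> Gamma_sq m1 m2"
  shows "winner m1 m2 (chi m1 m2 g) (chi m1 m2 h)
     = (if g = h then (if fst g \<in> {0, 2 * int m1} then 1 else 1 / 2) else 0)"
proof -
  obtain a1 a2 b1 b2 where gh: "g = (a1, a2)" "h = (b1, b2)" by fastforce
  from g h have a: "0 \<le> a1" "a1 \<le> 2 * int m1" "- int m2 < a2" "a2 \<le> int m2" "even (a1 + a2)"
    and b: "0 \<le> b1" "b1 \<le> 2 * int m1" "- int m2 < b2" "b2 \<le> int m2" "even (b1 + b2)"
    by (auto simp: gh Gamma_sq_def Kset_def)
  show ?thesis
  proof (cases "a2 = b2")
    case False
    moreover have "\<bar>a2 - b2\<bar> < 2 * int m2" using a b by auto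
    ultimately show ?thesis using winner_chi_eq_0_if_snd_ne[OF m1 False _ a(5) b(5)] by (simp add: gh)
  next
    case True
    have ab: "even (a1 + b1)" using a(5) b(5) True by presburger
    show ?thesis using m1
      unfolding gh True winner_chi_same_snd[OF m1 m2] sum_trapezoid_cos_mult_cos[OF m1 a(1,2) b(1,2) ab]
      by auto
  qed
qed

lemma Gamma_sq_spans:
  assumes m1: "m1 \<ge> 1" and m2: "m2 \<ge> 1"
  shows "\<exists>c. \<forall>i\<in>Ipts m1 m2. f i = (\<Sum>g\<in>Gamma_sq m1 m2. c g * chi m1 m2 g i)"
proof (rule orthogonal_family_spans[where w = "\<lambda>i. complex_of_real (wt m1 m2 i)"])
  show "finite (Ipts m1 m2)" by (rule finite_Ipts)
  show "finite (Gamma_sq m1 m2)" using finite_Kset by (rule finite_subset[rotated]) (auto simp: Gamma_sq_def)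
  show "card (Gamma_sq m1 m2) = card (Ipts m1 m2)" by (simp add: card_Gamma_sq card_Ipts)
  fix g assume g: "g \<in> Gamma_sq m1 m2"
  show "(\<Sum>i\<in>Ipts m1 m2. complex_of_real (wt m1 m2 i) * chi m1 m2 g i * cnj (chi m1 m2 g i)) \<noteq> 0"
    using winner_chi_Gamma_sq[OF m1 m2 g g] unfolding winner_def by auto
next
  fix g h assume "g \<in> Gamma_sq m1 m2" "h \<in> Gamma_sq m1 m2" "g \<noteq> h"
  then show "(\<Sum>i\<in>Ipts m1 m2. complex_of_real (wt m1 m2 i) * chi m1 m2 g i * cnj (chi m1 m2 h i)) = 0"
    using winner_chi_Gamma_sq[OF m1 m2, of g h] unfolding winner_def by auto
qed

text \<open>\<open>flip_def\<close> must not be given to the full simplifier: it loops on the \<open>mod\<close>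
  condition under \<open>THE\<close>.\<close>
lemma fst_flip [simp]: "fst (flip m1 m2 g) = 2 * int m1 - fst g"
  by (simp only: flip_def fst_conv)

lemma flip_pair:
  assumes "(g1, g2) \<in> Kset m1 m2"
  shows "flip m1 m2 (g1, g2) = (2 * int m1 - g1, if g2 \<le> 0 then g2 + 2 * int m2 else g2 - 2 * int m2)"
proof -
  from assms have range: "- 2 * int m2 < g2" "g2 \<le> 2 * int m2" by (auto simp: Kset_def)
  define c where "c = (if g2 \<le> 0 then g2 + 2 * int m2 else g2 - 2 * int m2)"
  let ?P = "\<lambda>x. - 2 * int m2 < x \<and> x \<le> 2 * int m2 \<and> x mod (4 * int m2) = (g2 + 2 * int m2) mod (4 * int m2)"
  have P: "?P c"
  proof (cases "g2 \<le> 0")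
    case False
    have "(g2 - 2 * int m2) mod (4 * int m2) = (g2 - 2 * int m2 + 4 * int m2) mod (4 * int m2)"
      by (metis mod_add_self2)
    then show ?thesis using range False by (auto simp: c_def algebra_simps)
  qed (use range in \<open>auto simp: c_def\<close>)
  have "x = c" if "?P x" for x
  proof -
    have "x mod (4 * int m2) = c mod (4 * int m2)" using that P by simp
    then have "4 * int m2 dvd x - c" by (simp add: mod_eq_dvd_iff)
    moreover have "\<bar>x - c\<bar> < 4 * int m2" using that P by linarith
    ultimately show ?thesis using dvd_abs_less_imp_eq_0[of "4 * int m2" "x - c"] by simp
  qed
  then have "(THE x. ?P x) = c" using P by (intro the_equality) blast+
  then show ?thesis unfolding flip_def fst_conv snd_conv by (simp only: c_def)
qed

definition Keven :: "nat \<Rightarrow> nat \<Rightarrow> (int \<times> int) set" where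
  "Keven m1 m2 = {g \<in> Kset m1 m2. even (fst g + snd g)}"

lemma Gamma_sq_eq: "Gamma_sq m1 m2 = {g \<in> Keven m1 m2. - int m2 < snd g \<and> snd g \<le> int m2}"
  unfolding Gamma_sq_def Keven_def by auto

lemma Gamma_sq_subset_Keven: "Gamma_sq m1 m2 \<subseteq> Keven m1 m2"
  unfolding Gamma_sq_eq by blast

lemma flip_in_Kset:
  assumes "g \<in> Kset m1 m2"
  shows "flip m1 m2 g \<in> Kset m1 m2"
  using assms by (cases g) (simp add: flip_pair, auto simp: Kset_def)

lemma flip_flip:
  assumes "g \<in> Kset m1 m2"
  shows "flip m1 m2 (flip m1 m2 g) = g"
proof -
  obtain g1 g2 where g: "g = (g1, g2)" by fastforce
  define c where "c = (if g2 \<le> 0 then g2 + 2 * int m2 else g2 - 2 * int m2)"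
  have fg: "flip m1 m2 g = (2 * int m1 - g1, c)" using assms by (simp add: flip_pair g c_def)
  then have "flip m1 m2 (flip m1 m2 g) = (g1, if c \<le> 0 then c + 2 * int m2 else c - 2 * int m2)"
    using flip_pair[of "2 * int m1 - g1" c] flip_in_Kset[OF assms] by simp
  then show ?thesis using assms by (auto simp: g c_def Kset_def)
qed

lemma flip_neq:
  assumes "g \<in> Kset m1 m2"
  shows "flip m1 m2 g \<noteq> g"
  using assms by (cases g) (simp add: flip_pair, auto simp: Kset_def)

lemma flip_in_Keven_iff:
  assumes "g \<in> Kset m1 m2"
  shows "flip m1 m2 g \<in> Keven m1 m2 \<longleftrightarrow> g \<in> Keven m1 m2"
proof -
  obtain g1 g2 where g: "g = (g1, g2)" by fastforce
  have "flip m1 m2 g = (2 * int m1 - g1, if g2 \<le> 0 then g2 + 2 * int m2 else g2 - 2 * int m2)"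
    using assms by (simp add: g flip_pair)
  then show ?thesis using assms flip_in_Kset[OF assms] by (auto simp: g Keven_def)
qed

lemma Gamma_sq_iff_flip_notin:
  assumes "g \<in> Keven m1 m2"
  shows "g \<in> Gamma_sq m1 m2 \<longleftrightarrow> flip m1 m2 g \<notin> Gamma_sq m1 m2"
proof -
  obtain g1 g2 where g: "g = (g1, g2)" by fastforce
  define c where "c = (if g2 \<le> 0 then g2 + 2 * int m2 else g2 - 2 * int m2)"
  have K: "g \<in> Kset m1 m2" using assms by (simp add: Keven_def)
  then have range: "- 2 * int m2 < g2" "g2 \<le> 2 * int m2" by (auto simp: g Kset_def)
  have "flip m1 m2 g = (2 * int m1 - g1, c)" using K by (simp add: g flip_pair c_def)
  moreover have "flip m1 m2 g \<in> Keven m1 m2" using flip_in_Keven_iff[OF K] assms by simp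
  ultimately have "flip m1 m2 g \<in> Gamma_sq m1 m2 \<longleftrightarrow> - int m2 < c \<and> c \<le> int m2"
    by (simp add: Gamma_sq_eq)
  moreover have "g \<in> Gamma_sq m1 m2 \<longleftrightarrow> - int m2 < g2 \<and> g2 \<le> int m2"
    using assms by (simp add: Gamma_sq_eq g)
  ultimately show ?thesis using range by (auto simp: c_def)
qed

text \<open>Shifting \<open>\<gamma>\<^sub>1 \<mapsto> 2m\<^sub>1 - \<gamma>\<^sub>1\<close> multiplies \<open>\<chi>\<^sub>\<gamma>(i)\<close> by \<open>(-1)^i\<^sub>1\<close>, and
  \<open>\<gamma>\<^sub>2 \<mapsto> \<gamma>\<^sub>2 + 2m\<^sub>2e\<close> by \<open>(-1)^(e i\<^sub>2)\<close>; the two signs cancel on points with \<open>i\<^sub>1 + e i\<^sub>2\<close> even.\<close>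
lemma chi_shift:
  fixes g1 g2 i1 i2 e :: int
  assumes m1: "m1 \<ge> 1" and m2: "m2 \<ge> 1" and ev: "even (i1 + e * i2)"
  shows "chi m1 m2 (2 * int m1 - g1, g2 + 2 * int m2 * e) (i1, i2) = chi m1 m2 (g1, g2) (i1, i2)"
proof -
  define x where "x = real_of_int g1 * real_of_int i1 * pi / (2 * real m1)"
  define y where "y = real_of_int g2 * real_of_int i2 * pi / (2 * real m2)"
  have c: "cos (real_of_int (2 * int m1 - g1) * real_of_int i1 * pi / (2 * real m1)) = cos (pi * real_of_int i1) * cos x"
  proof -
    have "real_of_int (2 * int m1 - g1) * real_of_int i1 * pi / (2 * real m1) = pi * real_of_int i1 - x"
      unfolding x_def using m1 by (simp add: field_simps)
    then show ?thesis by (simp add: cos_diff)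
  qed
  have ex: "exp (\<i> * complex_of_real (real_of_int (g2 + 2 * int m2 * e) * real_of_int i2 * pi / (2 * real m2)))
     = exp (\<i> * complex_of_real y) * complex_of_real (cos (pi * real_of_int (e * i2)))"
  proof -
    have "real_of_int (g2 + 2 * int m2 * e) * real_of_int i2 * pi / (2 * real m2) = y + pi * real_of_int (e * i2)"
      unfolding y_def using m2 by (simp add: field_simps)
    moreover have exp_pi: "exp (\<i> * complex_of_real (pi * real_of_int n)) = complex_of_real (cos (pi * real_of_int n))"
      for n :: int
    proof -
      have "exp (\<i> * complex_of_real (pi * real_of_int n)) = cis (pi * real_of_int n)" by (simp add: cis_conv_exp)
      then show ?thesis by (simp add: complex_eq_iff)
    qed
    ultimately show ?thesis by (simp only: of_real_add distrib_left exp_add)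
  qed
  have one: "cos (pi * real_of_int i1) * cos (pi * real_of_int (e * i2)) = 1"
  proof -
    obtain k where k: "i1 + e * i2 = 2 * k" using ev by (rule evenE)
    have "cos (pi * real_of_int i1) * cos (pi * real_of_int (e * i2)) = cos (pi * real_of_int i1 + pi * real_of_int (e * i2))"
      by (simp add: cos_add)
    also have "pi * real_of_int i1 + pi * real_of_int (e * i2) = (2 * pi) * real_of_int k"
      by (simp add: distrib_left[symmetric]) (metis k of_int_add of_int_mult of_int_numeral mult.assoc mult.commute mult.left_commute)
    finally show ?thesis by simp
  qed
  have "chi m1 m2 (2 * int m1 - g1, g2 + 2 * int m2 * e) (i1, i2)
     = complex_of_real (cos x) * exp (\<i> * complex_of_real y) * complex_of_real (cos (pi * real_of_int i1) * cos (pi * real_of_int (e * i2)))"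
    unfolding chi_def fst_conv snd_conv c ex by (simp add: algebra_simps)
  also have "\<dots> = chi m1 m2 (g1, g2) (i1, i2)" unfolding one chi_def x_def y_def by simp
  finally show ?thesis .
qed

lemma chi_flip:
  assumes m1: "m1 \<ge> 1" and g: "g \<in> Keven m1 m2" and i: "i \<in> Ipts m1 m2"
  shows "chi m1 m2 (flip m1 m2 g) i = chi m1 m2 g i"
proof -
  obtain g1 g2 i1 i2 where gi: "g = (g1, g2)" "i = (i1, i2)" by fastforce
  define e :: int where "e = (if g2 \<le> 0 then 1 else - 1)"
  have K: "(g1, g2) \<in> Kset m1 m2" using g by (simp add: gi Keven_def)
  then have m2: "m2 \<ge> 1" by (auto simp: Kset_def)
  have "flip m1 m2 g = (2 * int m1 - g1, g2 + 2 * int m2 * e)"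
    using K by (simp add: gi flip_pair e_def)
  moreover have "even (i1 + e * i2)" using i by (auto simp: gi Ipts_def e_def)
  ultimately show ?thesis unfolding gi by (simp only: chi_shift[OF m1 m2])
qed

definition sq_rep :: "nat \<Rightarrow> nat \<Rightarrow> int \<times> int \<Rightarrow> int \<times> int" where
  "sq_rep m1 m2 g = (if g \<in> Gamma_sq m1 m2 then g else flip m1 m2 g)"

lemma sq_rep_in_Gamma_sq: "g \<in> Keven m1 m2 \<Longrightarrow> sq_rep m1 m2 g \<in> Gamma_sq m1 m2"
  using Gamma_sq_iff_flip_notin by (auto simp: sq_rep_def)

lemma winner_chi_Keven:
  assumes m1: "m1 \<ge> 1" and m2: "m2 \<ge> 1" and g: "g \<in> Keven m1 m2" and h: "h \<in> Keven m1 m2"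
  shows "winner m1 m2 (chi m1 m2 g) (chi m1 m2 h)
     = (if sq_rep m1 m2 g = sq_rep m1 m2 h then (if fst g \<in> {0, 2 * int m1} then 1 else 1 / 2) else 0)"
proof -
  have "winner m1 m2 (chi m1 m2 g) (chi m1 m2 h) = winner m1 m2 (chi m1 m2 (sq_rep m1 m2 g)) (chi m1 m2 (sq_rep m1 m2 h))"
    by (rule winner_cong) (auto simp: sq_rep_def chi_flip[OF m1 g] chi_flip[OF m1 h])
  also have "\<dots> = (if sq_rep m1 m2 g = sq_rep m1 m2 h then (if fst g \<in> {0, 2 * int m1} then 1 else 1 / 2) else 0)"
  proof -
    have "fst (sq_rep m1 m2 g) \<in> {0, 2 * int m1} \<longleftrightarrow> fst g \<in> {0, 2 * int m1}"
      by (auto simp: sq_rep_def)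
    then show ?thesis
      using winner_chi_Gamma_sq[OF m1 m2 sq_rep_in_Gamma_sq[OF g] sq_rep_in_Gamma_sq[OF h]] by (simp only:)
  qed
  finally show ?thesis .
qed

lemma Gamma_Omega_subset_Keven:
  "\<Omega> \<subseteq> Gamma_sq m1 m2 \<Longrightarrow> Gamma_Omega m1 m2 \<Omega> \<subseteq> Keven m1 m2"
  unfolding Gamma_Omega_def using Gamma_sq_subset_Keven flip_in_Keven_iff by blast

text \<open>The inverse of \<open>sq_rep\<close> on \<open>\<Gamma>\<^sub>\<Omega>\<close> flips exactly the points of \<open>\<Omega>\<close>.\<close>
lemma bij_betw_sq_rep_Gamma_Omega:
  assumes \<Omega>: "\<Omega> \<subseteq> Gamma_sq m1 m2"
  shows "bij_betw (sq_rep m1 m2) (Gamma_Omega m1 m2 \<Omega>) (Gamma_sq m1 m2)"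
proof (rule bij_betw_byWitness[where f' = "\<lambda>d. if d \<in> \<Omega> then flip m1 m2 d else d"])
  have \<Omega>E: "d \<in> \<Omega> \<Longrightarrow> d \<in> Keven m1 m2" for d using \<Omega> Gamma_sq_subset_Keven by blast
  show "\<forall>g\<in>Gamma_Omega m1 m2 \<Omega>. (if sq_rep m1 m2 g \<in> \<Omega> then flip m1 m2 (sq_rep m1 m2 g) else sq_rep m1 m2 g) = g"
  proof
    fix g assume g: "g \<in> Gamma_Omega m1 m2 \<Omega>"
    then have gE: "g \<in> Keven m1 m2" using Gamma_Omega_subset_Keven[OF \<Omega>] by blast
    show "(if sq_rep m1 m2 g \<in> \<Omega> then flip m1 m2 (sq_rep m1 m2 g) else sq_rep m1 m2 g) = g"
    proof (cases "g \<in> Gamma_sq m1 m2")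
      case True
      then have "g \<notin> \<Omega>" using g \<Omega> Gamma_sq_iff_flip_notin[OF gE] by (auto simp: Gamma_Omega_def)
      then show ?thesis using True by (simp add: sq_rep_def)
    next
      case False
      then have "flip m1 m2 g \<in> \<Omega>" using g by (auto simp: Gamma_Omega_def)
      then show ?thesis using False gE by (simp add: sq_rep_def flip_flip Keven_def)
    qed
  qed
  show "\<forall>d\<in>Gamma_sq m1 m2. sq_rep m1 m2 (if d \<in> \<Omega> then flip m1 m2 d else d) = d"
    using Gamma_sq_iff_flip_notin[OF \<Omega>E] \<Omega>E by (auto simp: sq_rep_def flip_flip Keven_def)
  show "sq_rep m1 m2 ` Gamma_Omega m1 m2 \<Omega> \<subseteq> Gamma_sq m1 m2"
    using sq_rep_in_Gamma_sq Gamma_Omega_subset_Keven[OF \<Omega>] by blast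
  show "(\<lambda>d. if d \<in> \<Omega> then flip m1 m2 d else d) ` Gamma_sq m1 m2 \<subseteq> Gamma_Omega m1 m2 \<Omega>"
    using \<Omega>E by (auto simp: Gamma_Omega_def flip_in_Kset flip_flip Keven_def)
qed

lemma spectral_index_set_Gamma_Omega:
  assumes m1: "m1 \<ge> 1" and m2: "m2 \<ge> 1" and \<Omega>: "\<Omega> \<subseteq> Gamma_sq m1 m2"
  shows "spectral_index_set m1 m2 (Gamma_Omega m1 m2 \<Omega>)"
proof -
  let ?G = "Gamma_Omega m1 m2 \<Omega>"
  note sub = Gamma_Omega_subset_Keven[OF \<Omega>]
  note bij = bij_betw_sq_rep_Gamma_Omega[OF \<Omega>]
  have winner: "winner m1 m2 (chi m1 m2 g) (chi m1 m2 h) = (if g = h then (if fst g \<in> {0, 2 * int m1} then 1 else 1 / 2) else 0)"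
    if g: "g \<in> ?G" and h: "h \<in> ?G" for g h
  proof -
    have "sq_rep m1 m2 g = sq_rep m1 m2 h \<longleftrightarrow> g = h"
      using g h bij_betw_imp_inj_on[OF bij] by (auto simp: inj_on_def)
    moreover have "g \<in> Keven m1 m2" "h \<in> Keven m1 m2" using g h sub by blast+
    ultimately show ?thesis by (simp only: winner_chi_Keven[OF m1 m2])
  qed
  have span: "\<exists>c. \<forall>i\<in>Ipts m1 m2. f i = (\<Sum>\<gamma>\<in>?G. c \<gamma> * chi m1 m2 \<gamma> i)" for f
  proof -
    obtain c where c: "\<forall>i\<in>Ipts m1 m2. f i = (\<Sum>d\<in>Gamma_sq m1 m2. c d * chi m1 m2 d i)"
      using Gamma_sq_spans[OF m1 m2] by blast
    have "f i = (\<Sum>g\<in>?G. c (sq_rep m1 m2 g) * chi m1 m2 g i)" if i: "i \<in> Ipts m1 m2" for i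
    proof -
      have "f i = (\<Sum>d\<in>Gamma_sq m1 m2. c d * chi m1 m2 d i)" using c i by blast
      also have "\<dots> = (\<Sum>g\<in>?G. c (sq_rep m1 m2 g) * chi m1 m2 (sq_rep m1 m2 g) i)"
        by (rule sum.reindex_bij_betw[OF bij, symmetric])
      also have "\<dots> = (\<Sum>g\<in>?G. c (sq_rep m1 m2 g) * chi m1 m2 g i)"
      proof (rule sum.cong[OF refl])
        fix g assume "g \<in> ?G"
        then have "g \<in> Keven m1 m2" using sub by blast
        then show "c (sq_rep m1 m2 g) * chi m1 m2 (sq_rep m1 m2 g) i = c (sq_rep m1 m2 g) * chi m1 m2 g i"
          by (simp add: sq_rep_def chi_flip[OF m1 _ i])
      qed
      finally show ?thesis .
    qed
    then have "\<forall>i\<in>Ipts m1 m2. f i = (\<Sum>\<gamma>\<in>?G. (c \<circ> sq_rep m1 m2) \<gamma> * chi m1 m2 \<gamma> i)" by simp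
    then show ?thesis by blast
  qed
  show ?thesis unfolding spectral_index_set_def
  proof (intro conjI allI)
    show "?G \<subseteq> Kset m1 m2" "\<forall>\<gamma>\<in>?G. even (fst \<gamma> + snd \<gamma>)"
      using sub by (auto simp: Keven_def)
    show "\<forall>\<gamma>\<in>?G. winner m1 m2 (chi m1 m2 \<gamma>) (chi m1 m2 \<gamma>) \<noteq> 0"
      and "\<forall>\<gamma>\<in>?G. \<forall>\<gamma>'\<in>?G. \<gamma> \<noteq> \<gamma>' \<longrightarrow> winner m1 m2 (chi m1 m2 \<gamma>) (chi m1 m2 \<gamma>') = 0"
      using winner by simp_all
  qed (rule span)
qed

lemma spectral_index_setD:
  assumes "spectral_index_set m1 m2 \<Gamma>"
  shows spectral_index_set_subset_Keven: "\<Gamma> \<subseteq> Keven m1 m2"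
    and "\<gamma> \<in> \<Gamma> \<Longrightarrow> winner m1 m2 (chi m1 m2 \<gamma>) (chi m1 m2 \<gamma>) \<noteq> 0"
    and "\<gamma> \<in> \<Gamma> \<Longrightarrow> \<gamma>' \<in> \<Gamma> \<Longrightarrow> \<gamma> \<noteq> \<gamma>' \<Longrightarrow> winner m1 m2 (chi m1 m2 \<gamma>) (chi m1 m2 \<gamma>') = 0"
    and "\<exists>c. \<forall>i\<in>Ipts m1 m2. f i = (\<Sum>\<gamma>\<in>\<Gamma>. c \<gamma> * chi m1 m2 \<gamma> i)"
  using assms unfolding spectral_index_set_def Keven_def by (simp_all add: subset_iff)

text \<open>\<open>\<chi>\<^sub>\<gamma>\<close> and \<open>\<chi>\<^sub>\<gamma>\<^sub>*\<close> coincide on \<open>I\<^sup>(\<^sup>m\<^sup>)\<close>, so they cannot be both nonzero and orthogonal.\<close>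
lemma spectral_index_set_flip_notin:
  assumes m1: "m1 \<ge> 1" and S: "spectral_index_set m1 m2 \<Gamma>" and g: "g \<in> \<Gamma>"
  shows "flip m1 m2 g \<notin> \<Gamma>"
proof
  assume fg: "flip m1 m2 g \<in> \<Gamma>"
  have gE: "g \<in> Keven m1 m2" using spectral_index_set_subset_Keven[OF S] g by blast
  have "winner m1 m2 (chi m1 m2 g) (chi m1 m2 (flip m1 m2 g)) = winner m1 m2 (chi m1 m2 g) (chi m1 m2 g)"
    by (rule winner_cong) (simp_all add: chi_flip[OF m1 gE])
  moreover have "flip m1 m2 g \<noteq> g" using gE flip_neq by (simp add: Keven_def)
  then have "winner m1 m2 (chi m1 m2 g) (chi m1 m2 (flip m1 m2 g)) = 0"
    using spectral_index_setD(3)[OF S g fg] by simp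
  moreover have "winner m1 m2 (chi m1 m2 g) (chi m1 m2 g) \<noteq> 0"
    by (rule spectral_index_setD(2)[OF S g])
  ultimately show False by simp
qed

text \<open>Otherwise \<open>\<chi>\<^sub>d\<close> would be orthogonal to every \<open>\<chi>\<^sub>\<gamma>\<close>, \<open>\<gamma> \<in> \<Gamma>\<close>, while lying in their span.\<close>
lemma spectral_index_set_mem_or_flip_mem:
  assumes m1: "m1 \<ge> 1" and m2: "m2 \<ge> 1" and S: "spectral_index_set m1 m2 \<Gamma>" and d: "d \<in> Gamma_sq m1 m2"
  shows "d \<in> \<Gamma> \<or> flip m1 m2 d \<in> \<Gamma>"
proof (rule ccontr)
  assume "\<not> (d \<in> \<Gamma> \<or> flip m1 m2 d \<in> \<Gamma>)"
  then have nd: "d \<notin> \<Gamma>" "flip m1 m2 d \<notin> \<Gamma>" by auto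
  have dE: "d \<in> Keven m1 m2" using d Gamma_sq_subset_Keven by blast
  have orth: "winner m1 m2 (chi m1 m2 d) (chi m1 m2 \<gamma>) = 0" if "\<gamma> \<in> \<Gamma>" for \<gamma>
  proof -
    have \<gamma>E: "\<gamma> \<in> Keven m1 m2" using spectral_index_set_subset_Keven[OF S] that by blast
    have "\<gamma> \<in> Kset m1 m2" using \<gamma>E by (simp add: Keven_def)
    then have "sq_rep m1 m2 \<gamma> \<noteq> d"
      using that nd flip_flip[of \<gamma>] by (auto simp: sq_rep_def)
    moreover have "sq_rep m1 m2 d = d" using d by (simp add: sq_rep_def)
    ultimately show ?thesis using winner_chi_Keven[OF m1 m2 dE \<gamma>E] by simp
  qed
  obtain c where c: "\<forall>i\<in>Ipts m1 m2. chi m1 m2 d i = (\<Sum>\<gamma>\<in>\<Gamma>. c \<gamma> * chi m1 m2 \<gamma> i)"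
    using spectral_index_setD(4)[OF S] by blast
  have "winner m1 m2 (chi m1 m2 d) (chi m1 m2 d) = winner m1 m2 (chi m1 m2 d) (\<lambda>i. \<Sum>\<gamma>\<in>\<Gamma>. c \<gamma> * chi m1 m2 \<gamma> i)"
    by (rule winner_cong) (simp_all add: c)
  also have "\<dots> = 0" unfolding winner_sum_right using orth by simp
  finally show False using winner_chi_Gamma_sq[OF m1 m2 d d] by (simp split: if_splits)
qed

lemma spectral_index_set_eq_Gamma_Omega:
  assumes m1: "m1 \<ge> 1" and m2: "m2 \<ge> 1" and S: "spectral_index_set m1 m2 \<Gamma>"
  shows "\<Gamma> = Gamma_Omega m1 m2 (Gamma_sq m1 m2 - \<Gamma>)"
proof (intro equalityI subsetI)
  fix g assume g: "g \<in> \<Gamma>"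
  then have gE: "g \<in> Keven m1 m2" using spectral_index_set_subset_Keven[OF S] by blast
  show "g \<in> Gamma_Omega m1 m2 (Gamma_sq m1 m2 - \<Gamma>)"
  proof (cases "g \<in> Gamma_sq m1 m2")
    case True
    then show ?thesis using g by (simp add: Gamma_Omega_def)
  next
    case False
    then have "flip m1 m2 g \<in> Gamma_sq m1 m2 - \<Gamma>"
      using Gamma_sq_iff_flip_notin[OF gE] spectral_index_set_flip_notin[OF m1 S g] by simp
    then show ?thesis using gE by (simp add: Gamma_Omega_def Keven_def)
  qed
next
  fix g assume "g \<in> Gamma_Omega m1 m2 (Gamma_sq m1 m2 - \<Gamma>)"
  then consider "g \<in> \<Gamma>" | "g \<in> Kset m1 m2" "flip m1 m2 g \<in> Gamma_sq m1 m2" "flip m1 m2 g \<notin> \<Gamma>"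
    by (auto simp: Gamma_Omega_def)
  then show "g \<in> \<Gamma>"
  proof cases
    case 2
    then have "flip m1 m2 (flip m1 m2 g) \<in> \<Gamma>"
      using spectral_index_set_mem_or_flip_mem[OF m1 m2 S, of "flip m1 m2 g"] by blast
    then show ?thesis using flip_flip[OF 2(1)] by simp
  qed
qed

lemma card_spectral_index_set:
  assumes m1: "m1 \<ge> 1" and m2: "m2 \<ge> 1" and S: "spectral_index_set m1 m2 \<Gamma>"
  shows "card \<Gamma> = (2 * m1 + 1) * m2"
proof -
  have "bij_betw (sq_rep m1 m2) \<Gamma> (Gamma_sq m1 m2)"
    using bij_betw_sq_rep_Gamma_Omega[of "Gamma_sq m1 m2 - \<Gamma>"]
    by (subst spectral_index_set_eq_Gamma_Omega[OF m1 m2 S]) blast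
  then show ?thesis by (simp add: bij_betw_same_card card_Gamma_sq)
qed

theorem corollary5p2:
  fixes m1 m2 :: nat
  assumes "m1 \<ge> 1" and "m2 \<ge> 1"
  shows "(\<forall>\<Omega>. \<Omega> \<subseteq> Gamma_sq m1 m2 \<longrightarrow> spectral_index_set m1 m2 (Gamma_Omega m1 m2 \<Omega>))
     \<and> (\<forall>\<Gamma>. spectral_index_set m1 m2 \<Gamma> \<longrightarrow> (\<exists>\<Omega>. \<Omega> \<subseteq> Gamma_sq m1 m2 \<and> \<Gamma> = Gamma_Omega m1 m2 \<Omega>))
     \<and> (\<forall>\<Gamma>. spectral_index_set m1 m2 \<Gamma> \<longrightarrow> card \<Gamma> = (2 * m1 + 1) * m2)
     \<and> (\<forall>\<Gamma> \<gamma>. spectral_index_set m1 m2 \<Gamma> \<and> \<gamma> \<in> \<Gamma> \<longrightarrow>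
          winner m1 m2 (chi m1 m2 \<gamma>) (chi m1 m2 \<gamma>) =
            (if fst \<gamma> \<in> {0, 2 * int m1} then 1 else 1 / 2))"
proof (intro conjI allI impI)
  fix \<Omega> assume "\<Omega> \<subseteq> Gamma_sq m1 m2"
  then show "spectral_index_set m1 m2 (Gamma_Omega m1 m2 \<Omega>)"
    using spectral_index_set_Gamma_Omega assms by blast
next
  fix \<Gamma> assume "spectral_index_set m1 m2 \<Gamma>"
  then show "\<exists>\<Omega>. \<Omega> \<subseteq> Gamma_sq m1 m2 \<and> \<Gamma> = Gamma_Omega m1 m2 \<Omega>"
    using spectral_index_set_eq_Gamma_Omega assms by blast
next
  fix \<Gamma> assume "spectral_index_set m1 m2 \<Gamma>"
  then show "card \<Gamma> = (2 * m1 + 1) * m2" using card_spectral_index_set assms by blast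
next
  fix \<Gamma> \<gamma> assume "spectral_index_set m1 m2 \<Gamma> \<and> \<gamma> \<in> \<Gamma>"
  then have "\<gamma> \<in> Keven m1 m2" using spectral_index_set_subset_Keven by blast
  then show "winner m1 m2 (chi m1 m2 \<gamma>) (chi m1 m2 \<gamma>) = (if fst \<gamma> \<in> {0, 2 * int m1} then 1 else 1 / 2)"
    using winner_chi_Keven assms by simp
qed

end
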